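(* Let $T_{ab}$ be a rank-2 tensor with symmetric part $S_{ab}=T_{(ab)}$ and antisymmetric part $F_{ab}=T_{[ab]}$. Then there is a real $f$ with $$S_{ac}S_b{}^c+F_{ac}F_b{}^c=fg_{ab},\qquad S_{ac}F_b{}^c+S_{bc}F_a{}^c=0$$ if and only if $T_a{}^b$ defines a null-cone bi-preserving map. Furthermore, in that case $S_{ab}\in\mathcal{DP}\cup-\mathcal{DP}$.
   Context: Lorentzian metric $g_{ab}$ of signature $(+,-,\dots,-)$, dimension $N\ge3$, with time orientation. $T_a{}^b$ is null-cone bi-preserving if both $k^aT_a{}^b$ and $T_a{}^bk_b$ are null or zero for every null $k$ (null: $k\ne0$, $k\cdot k=0$). $\mathcal{DP}$: rank-2 tensors $X$ with $X_{ab}u^av^b\ge0$ for all causal future-pointing $u,v$; $-\mathcal{DP}$ their negatives. *)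

theory Defs
  imports "HOL-Analysis.Analysis"
begin

text \<open>Tensors are matrices over the finite index type 'n (dimension N = CARD('n)).
  A rank-2 covariant tensor X_ab is X $ a $ b; the metric g_ab is a matrix G,
  and g^ab is its inverse matrix.\<close>

definition lorentzian_metric :: "real^'n^'n \<Rightarrow> bool" where
  "lorentzian_metric G \<longleftrightarrow> transpose G = G \<and>
     (\<exists>(P::real^'n^'n) i0. invertible P \<and>
        transpose P ** G ** P = (\<chi> i j. if i = j then (if i = i0 then 1 else -1) else 0))"

definition gform :: "real^'n^'n \<Rightarrow> real^'n \<Rightarrow> real^'n \<Rightarrow> real" where
  "gform G u v = u \<bullet> (G *v v)"

definition ginv :: "real^'n^'n \<Rightarrow> real^'n^'n" where
  "ginv G = matrix_inv G"

definition null_vec :: "real^'n^'n \<Rightarrow> real^'n \<Rightarrow> bool" where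
  "null_vec G k \<longleftrightarrow> k \<noteq> 0 \<and> gform G k k = 0"

definition null_or_zero_vec :: "real^'n^'n \<Rightarrow> real^'n \<Rightarrow> bool" where
  "null_or_zero_vec G v \<longleftrightarrow> v = 0 \<or> null_vec G v"

definition null_or_zero_cov :: "real^'n^'n \<Rightarrow> real^'n \<Rightarrow> bool" where
  "null_or_zero_cov G w \<longleftrightarrow> w = 0 \<or> null_vec (ginv G) w"

text \<open>mixed tensor T_a^b = T_ac g^cb\<close>
definition mixed :: "real^'n^'n \<Rightarrow> real^'n^'n \<Rightarrow> real^'n^'n" where
  "mixed G T = T ** ginv G"

text \<open>k^a T_a^b is  k v* mixed G T ;  T_a^b k_b with k_b = g_bc k^c is  mixed G T *v (G *v k)\<close>
definition null_cone_bipreserving :: "real^'n^'n \<Rightarrow> real^'n^'n \<Rightarrow> bool" where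
  "null_cone_bipreserving G T \<longleftrightarrow>
     (\<forall>k. null_vec G k \<longrightarrow>
        null_or_zero_vec G (k v* mixed G T) \<and> null_or_zero_cov G (mixed G T *v (G *v k)))"

text \<open>Time orientation given by a timelike vector tau; future-pointing causal vectors\<close>
definition future_causal :: "real^'n^'n \<Rightarrow> real^'n \<Rightarrow> real^'n \<Rightarrow> bool" where
  "future_causal G tau u \<longleftrightarrow> u \<noteq> 0 \<and> gform G u u \<ge> 0 \<and> gform G tau u > 0"

definition DP :: "real^'n^'n \<Rightarrow> real^'n \<Rightarrow> real^'n^'n \<Rightarrow> bool" where
  "DP G tau X \<longleftrightarrow>
     (\<forall>u v. future_causal G tau u \<and> future_causal G tau v \<longrightarrow> u \<bullet> (X *v v) \<ge> 0)"

definition sym_part :: "real^'n^'n \<Rightarrow> real^'n^'n" where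
  "sym_part T = (1/2) *\<^sub>R (T + transpose T)"

definition antisym_part :: "real^'n^'n \<Rightarrow> real^'n^'n" where
  "antisym_part T = (1/2) *\<^sub>R (T - transpose T)"

end

theory Submission
  imports Defs
begin

(*
  Every Lorentzian metric is congruent to the Minkowski form, so the facts of causal geometry
  that are needed are proved in Minkowski coordinates and transported: a timelike vector is
  orthogonal to no nonzero causal vector, causal vectors on the same side of a timelike one pair
  nonnegatively, orthogonal null vectors are collinear, a symmetric form vanishing on the null
  cone is a multiple of the metric, and for N >= 3 no linear map rescales the metric by a
  negative factor.

  Null-cone bi-preservation says that the forms T g^-1 T^t and T^t g^-1 T vanish on the null
  cone, so both are multiples of g; comparing their traces against g^-1 shows that the two
  factors agree. Half their sum and half their difference are the two expressions in S and F.

  The common factor c is nonnegative. If c > 0, the conformal map L = g^-1 T^t sends the future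
  cone into one half of the causal cone, so u.T v = g(L u, v) has a constant sign for future
  causal u, v. If c = 0, all L u are null and mutually orthogonal, hence multiples of one null
  vector n, and T has rank one: (u.T v)(n.t) = (m.u)(n.v) with m null, and each factor has a
  constant sign. The sign of T passes to its symmetric part.
*)

section \<open>Matrices and bilinear forms\<close>

lemma matrix_inv_right:
  fixes A :: "'a::semiring_1^'n^'m"
  shows "invertible A \<Longrightarrow> A ** matrix_inv A = mat 1"
  unfolding invertible_def matrix_inv_def
  using someI_ex[of "\<lambda>A'. A ** A' = mat 1 \<and> A' ** A = mat 1"] by blast

lemma matrix_inv_left:
  fixes A :: "'a::semiring_1^'n^'m"
  shows "invertible A \<Longrightarrow> matrix_inv A ** A = mat 1"
  unfolding invertible_def matrix_inv_def
  using someI_ex[of "\<lambda>A'. A ** A' = mat 1 \<and> A' ** A = mat 1"] by blast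

lemma matrix_vector_mult_uminus_left: "(- A) *v x = - (A *v (x::real^'n))"
  using scaleR_matrix_vector_assoc[of "-1" A x] by simp

lemma congruence_inverse:
  fixes P X :: "real^'n^'n"
  assumes "invertible P"
  shows "transpose (matrix_inv P) ** (transpose P ** X ** P) ** matrix_inv P = X"
proof -
  have "transpose (matrix_inv P) ** transpose P = mat 1"
    by (metis assms matrix_inv_right matrix_transpose_mul transpose_mat)
  moreover have "transpose (matrix_inv P) ** (transpose P ** X ** P) ** matrix_inv P
      = (transpose (matrix_inv P) ** transpose P) ** X ** (P ** matrix_inv P)"
    by (simp add: matrix_mul_assoc)
  ultimately show ?thesis
    by (simp add: matrix_inv_right[OF assms])
qed

lemma matrix_add_rdistrib: "((A::'a::semiring_1^'n^'m) + B) ** C = A ** C + B ** C"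
  by (simp add: matrix_matrix_mult_def vec_eq_iff sum.distrib distrib_right)

lemma matrix_diff_rdistrib: "((A::'a::ring_1^'n^'m) - B) ** C = A ** C - B ** C"
  by (simp add: matrix_matrix_mult_def vec_eq_iff sum_subtractf left_diff_distrib)

lemma matrix_diff_ldistrib: "(C::'a::ring_1^'n^'m) ** (A - B) = C ** A - C ** B"
  by (simp add: matrix_matrix_mult_def vec_eq_iff sum_subtractf right_diff_distrib)

lemma transpose_congruence:
  "transpose H = H \<Longrightarrow> transpose (transpose P ** H ** P) = transpose P ** (H::real^'n^'n) ** P"
  by (simp add: matrix_transpose_mul matrix_mul_assoc)

lemma trace_transpose: "trace (transpose (X::'a::comm_semiring_1^'n^'n)) = trace X"
  by (simp add: trace_def transpose_def)

lemma trace_scaleR: "trace (c *\<^sub>R (X::real^'n^'n)) = c * trace X"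
  by (simp add: trace_def sum_distrib_left)

lemma trace_swap_transpose:
  fixes H T :: "real^'n^'n"
  assumes "transpose H = H"
  shows "trace (H ** (T ** H ** transpose T)) = trace (H ** (transpose T ** H ** T))"
proof -
  have "trace (H ** (T ** H ** transpose T)) = trace (transpose (H ** (T ** H ** transpose T)))"
    by (simp only: trace_transpose)
  also have "transpose (H ** (T ** H ** transpose T)) = T ** (H ** transpose T ** H)"
    by (simp add: matrix_transpose_mul assms matrix_mul_assoc)
  also have "trace \<dots> = trace ((H ** transpose T ** H) ** T)"
    by (rule trace_mul_sym)
  also have "\<dots> = trace (H ** (transpose T ** H ** T))"
    by (simp add: matrix_mul_assoc)
  finally show ?thesis .
qed

lemma gform_add_left: "gform G (x + y) z = gform G x z + gform G y z"
  by (simp add: gform_def inner_add_left)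

lemma gform_add_right: "gform G z (x + y) = gform G z x + gform G z y"
  by (simp add: gform_def inner_add_right matrix_vector_right_distrib)

lemma gform_diff_left: "gform G (x - y) z = gform G x z - gform G y z"
  by (simp add: gform_def inner_diff_left)

lemma gform_diff_right: "gform G z (x - y) = gform G z x - gform G z y"
  by (simp add: gform_def inner_diff_right matrix_vector_mult_diff_distrib)

lemma gform_scaleR_left: "gform G (a *\<^sub>R x) y = a * gform G x y"
  by (simp add: gform_def)

lemma gform_scaleR_right: "gform G x (a *\<^sub>R y) = a * gform G x y"
  by (simp add: gform_def matrix_vector_mult_scaleR)

lemma gform_minus_left: "gform G (- x) y = - gform G x y"
  using gform_scaleR_left[of G "-1"] by simp

lemma gform_minus_right: "gform G x (- y) = - gform G x y"
  using gform_scaleR_right[of G x "-1"] by simp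

lemma gform_zero_left [simp]: "gform G 0 y = 0"
  and gform_zero_right [simp]: "gform G x 0 = 0"
  by (simp_all add: gform_def)

lemmas gform_bilinear = gform_add_left gform_add_right gform_diff_left gform_diff_right
  gform_scaleR_left gform_scaleR_right gform_minus_left gform_minus_right

lemma gform_scaleR_matrix: "gform (c *\<^sub>R G) x y = c * gform G x y"
  by (simp add: gform_def flip: scaleR_matrix_vector_assoc)

lemma gform_commute: "transpose G = G \<Longrightarrow> gform G x y = gform G y x"
  unfolding gform_def by (metis dot_lmul_matrix inner_commute transpose_matrix_vector)

lemma gform_congruence: "gform G (P *v x) (P *v y) = gform (transpose P ** G ** P) x y"
  unfolding gform_def by (metis dot_lmul_matrix vector_transpose_matrix matrix_vector_mul_assoc)

section \<open>Minkowski space\<close>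

definition minkowski :: "'n \<Rightarrow> real^'n^'n" where
  "minkowski i0 = (\<chi> i j. if i = j then (if i = i0 then 1 else -1) else 0)"

definition spatial_part :: "'n \<Rightarrow> real^'n \<Rightarrow> real^'n" where
  "spatial_part i0 x = (\<chi> i. if i = i0 then 0 else x$i)"

lemma transpose_minkowski: "transpose (minkowski i0) = minkowski i0"
  by (simp add: minkowski_def transpose_def vec_eq_iff)

lemma minkowski_mult_vec: "minkowski i0 *v y = (\<chi> i. if i = i0 then y$i else - y$i)"
proof -
  have "(\<Sum>j\<in>UNIV. (if i = j then (if i = i0 then 1 else -1) else 0) * y$j)
      = (if i = i0 then y$i else - y$i)" for i
    by (simp add: if_distrib[of "\<lambda>a. a * _"] cong: if_cong)
  then show ?thesis by (simp add: minkowski_def matrix_vector_mult_def vec_eq_iff)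
qed

lemma minkowski_mult_self: "minkowski i0 ** minkowski i0 = mat 1"
  by (simp add: matrix_eq minkowski_mult_vec vec_eq_iff flip: matrix_vector_mul_assoc)

lemma gform_minkowski:
  "gform (minkowski i0) x y = x$i0 * y$i0 - spatial_part i0 x \<bullet> spatial_part i0 y"
proof -
  have "x$i * (minkowski i0 *v y)$i
      = (if i = i0 then x$i * y$i else 0) - spatial_part i0 x $ i * spatial_part i0 y $ i" for i
    by (simp add: minkowski_mult_vec spatial_part_def)
  then show ?thesis
    by (simp add: gform_def inner_vec_def sum_subtractf)
qed

lemma gform_minkowski_self:
  "gform (minkowski i0) x x = (x$i0)\<^sup>2 - spatial_part i0 x \<bullet> spatial_part i0 x"
  by (simp add: gform_minkowski power2_eq_square)

lemma zero_iff_time_and_spatial_part: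
  "x = 0 \<longleftrightarrow> x$i0 = 0 \<and> spatial_part i0 x = 0"
  by (auto simp: spatial_part_def vec_eq_iff)

lemma minkowski_causal_iff:
  "gform (minkowski i0) x x \<ge> 0 \<longleftrightarrow> norm (spatial_part i0 x) \<le> \<bar>x$i0\<bar>"
  by (simp add: gform_minkowski_self flip: power2_norm_eq_inner)
    (metis abs_le_square_iff abs_norm_cancel)

lemma minkowski_timelike_iff:
  "gform (minkowski i0) x x > 0 \<longleftrightarrow> norm (spatial_part i0 x) < \<bar>x$i0\<bar>"
  by (simp add: gform_minkowski_self flip: power2_norm_eq_inner)
    (metis abs_le_square_iff abs_norm_cancel not_le)

lemma minkowski_causal_time_component:
  assumes "gform (minkowski i0) y y \<ge> 0" "y \<noteq> 0"
  shows "y$i0 \<noteq> 0"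
  using assms zero_iff_time_and_spatial_part[of y i0] by (auto simp: minkowski_causal_iff)

lemma minkowski_spatial_inner_le:
  assumes "gform (minkowski i0) x x \<ge> 0" "gform (minkowski i0) y y \<ge> 0"
  shows "\<bar>spatial_part i0 x \<bullet> spatial_part i0 y\<bar> \<le> \<bar>x$i0 * y$i0\<bar>"
proof -
  have "\<bar>spatial_part i0 x \<bullet> spatial_part i0 y\<bar> \<le> norm (spatial_part i0 x) * norm (spatial_part i0 y)"
    by (rule Cauchy_Schwarz_ineq2)
  also have "\<dots> \<le> \<bar>x$i0\<bar> * \<bar>y$i0\<bar>"
    using assms by (intro mult_mono) (auto simp: minkowski_causal_iff)
  finally show ?thesis by (simp add: abs_mult)
qed

lemma minkowski_spatial_inner_less:
  assumes "gform (minkowski i0) t t > 0" "gform (minkowski i0) y y \<ge> 0" "y \<noteq> 0"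
  shows "\<bar>spatial_part i0 t \<bullet> spatial_part i0 y\<bar> < \<bar>t$i0 * y$i0\<bar>"
proof -
  have "\<bar>spatial_part i0 t \<bullet> spatial_part i0 y\<bar> \<le> norm (spatial_part i0 t) * norm (spatial_part i0 y)"
    by (rule Cauchy_Schwarz_ineq2)
  also have "\<dots> \<le> norm (spatial_part i0 t) * \<bar>y$i0\<bar>"
    using assms(2) by (intro mult_left_mono) (auto simp: minkowski_causal_iff)
  also have "\<dots> < \<bar>t$i0\<bar> * \<bar>y$i0\<bar>"
    using assms minkowski_causal_time_component[OF assms(2,3)]
    by (intro mult_strict_right_mono) (auto simp: minkowski_timelike_iff)
  finally show ?thesis by (simp add: abs_mult)
qed

lemma minkowski_timelike_causal_not_orthogonal:
  assumes "gform (minkowski i0) t t > 0" "gform (minkowski i0) y y \<ge> 0" "y \<noteq> 0"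
  shows "gform (minkowski i0) t y \<noteq> 0"
  using minkowski_spatial_inner_less[OF assms] by (auto simp: gform_minkowski)

lemma minkowski_pairing_sign:
  assumes "gform (minkowski i0) t t > 0" "gform (minkowski i0) y y \<ge> 0"
  shows "sgn (gform (minkowski i0) t y) = sgn (t$i0 * y$i0)"
  using minkowski_spatial_inner_less[OF assms]
  by (cases "y = 0") (auto simp: gform_minkowski sgn_if)

lemma minkowski_same_cone:
  assumes "gform (minkowski i0) x x \<ge> 0" "gform (minkowski i0) y y \<ge> 0"
    and "gform (minkowski i0) t t > 0"
    and "gform (minkowski i0) t x * gform (minkowski i0) t y > 0"
  shows "gform (minkowski i0) x y \<ge> 0"
proof -
  have "t$i0 \<noteq> 0"
    using assms(3) by (auto simp: minkowski_timelike_iff)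
  then have "(sgn (t$i0))\<^sup>2 = 1"
    by (simp add: sgn_if)
  moreover have "sgn (gform (minkowski i0) t x * gform (minkowski i0) t y)
      = (sgn (t$i0))\<^sup>2 * sgn (x$i0 * y$i0)"
    using minkowski_pairing_sign[OF assms(3,1)] minkowski_pairing_sign[OF assms(3,2)]
    by (simp add: sgn_mult power2_eq_square mult_ac)
  ultimately have "sgn (x$i0 * y$i0) = 1"
    using assms(4) by simp
  then have "x$i0 * y$i0 > 0"
    by (simp add: sgn_1_pos)
  then show ?thesis
    using minkowski_spatial_inner_le[OF assms(1,2)] by (simp add: gform_minkowski)
qed

lemma minkowski_orthogonal_null_collinear:
  assumes "gform (minkowski i0) x x = 0" "gform (minkowski i0) y y = 0"
    and "gform (minkowski i0) x y = 0" "y \<noteq> 0"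
  obtains s where "x = s *\<^sub>R y"
proof
  define z where "z = y$i0 *\<^sub>R x - x$i0 *\<^sub>R y"
  have "gform (minkowski i0) z z = 0"
    using assms by (simp add: z_def gform_bilinear gform_commute[OF transpose_minkowski, of i0 y x])
  then have "z = 0"
    using zero_iff_time_and_spatial_part[of z i0] minkowski_causal_iff[of i0 z]
    by (simp add: z_def)
  have "y$i0 \<noteq> 0"
    using minkowski_causal_time_component[of i0 y] assms by simp
  have "(x$i0 / y$i0) *\<^sub>R y = inverse (y$i0) *\<^sub>R (x$i0 *\<^sub>R y)"
    by (simp add: divide_inverse_commute)
  also have "\<dots> = inverse (y$i0) *\<^sub>R (y$i0 *\<^sub>R x)"
    using \<open>z = 0\<close> by (simp add: z_def)
  finally show "x = (x$i0 / y$i0) *\<^sub>R y"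
    using \<open>y$i0 \<noteq> 0\<close> by simp
qed

lemma gform_axis: "gform M (axis p 1) (axis q 1) = M$p$q"
  by (simp add: gform_def inner_axis' matrix_vector_mul_component inner_axis)

lemma gform_three_axes:
  "gform M (a *\<^sub>R axis p 1 + b *\<^sub>R axis q 1 + c *\<^sub>R axis r 1)
           (a *\<^sub>R axis p 1 + b *\<^sub>R axis q 1 + c *\<^sub>R axis r 1)
   = a*a*M$p$p + b*b*M$q$q + c*c*M$r$r
     + a*b*(M$p$q + M$q$p) + a*c*(M$p$r + M$r$p) + b*c*(M$q$r + M$r$q)"
  by (simp add: gform_bilinear gform_axis algebra_simps)

lemma minkowski_entry [simp]:
  "minkowski i0 $ p $ q = (if p = q then (if p = i0 then 1 else -1) else 0)"
  by (simp add: minkowski_def)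

lemma minkowski_symmetric_vanishing_on_null_cone:
  fixes M :: "real^'n^'n"
  assumes sym: "transpose M = M"
    and null: "\<And>x. gform (minkowski i0) x x = 0 \<Longrightarrow> gform M x x = 0"
  shows "M = M$i0$i0 *\<^sub>R minkowski i0"
proof -
  have S: "M$i$j = M$j$i" for i j
    using sym by (metis transpose_def vec_lambda_beta)
  let ?Q = "\<lambda>M a p b q c r. gform M (a *\<^sub>R axis p 1 + b *\<^sub>R axis q 1 + c *\<^sub>R axis r 1)
           (a *\<^sub>R axis p 1 + b *\<^sub>R axis q 1 + c *\<^sub>R axis r 1)"
  have time_row: "M$i0$j = 0 \<and> M$j$j = - M$i0$i0" if "j \<noteq> i0" for j
  proof -
    have "?Q (minkowski i0) 1 i0 1 j 0 j = 0" "?Q (minkowski i0) 1 i0 (-1) j 0 j = 0"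
      using that by (simp_all only: gform_three_axes) simp_all
    then have "?Q M 1 i0 1 j 0 j = 0" "?Q M 1 i0 (-1) j 0 j = 0"
      using null by blast+
    then show ?thesis
      using S[of i0 j] by (simp only: gform_three_axes) algebra
  qed
  have spatial_offdiag: "M$i$j = 0" if "i \<noteq> i0" "j \<noteq> i0" "i \<noteq> j" for i j
  proof -
    \<comment> \<open>5e_0 + 3e_i + 4e_j is null since 3^2 + 4^2 = 5^2\<close>
    have "?Q (minkowski i0) 5 i0 3 i 4 j = 0"
      using that by (simp only: gform_three_axes) simp
    then have "?Q M 5 i0 3 i 4 j = 0"
      using null by blast
    then show ?thesis
      using time_row[OF that(1)] time_row[OF that(2)] S[of i0 i] S[of i0 j] S[of i j]
      by (simp only: gform_three_axes) (simp add: algebra_simps)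
  qed
  show ?thesis
    unfolding vec_eq_iff
  proof (intro allI)
    fix i j
    show "M$i$j = (M$i0$i0 *\<^sub>R minkowski i0)$i$j"
      using time_row[of i] time_row[of j] spatial_offdiag[of i j] S[of i j]
      by (cases "i = i0"; cases "j = i0"; cases "i = j") auto
  qed
qed

lemma two_indices_besides:
  assumes "CARD('n) \<ge> 3"
  obtains i j :: 'n where "i \<noteq> i0" "j \<noteq> i0" "i \<noteq> j"
proof -
  have "2 \<le> card (UNIV - {i0})"
    using assms by (simp add: card_Diff_singleton)
  then obtain S where "S \<subseteq> UNIV - {i0}" "card S = 2"
    by (meson obtain_subset_with_card_n)
  then show ?thesis
    using that by (auto simp: card_2_iff)
qed

lemma minkowski_conformal_factor_nonneg:
  fixes A :: "real^'n^'n"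
  assumes "CARD('n) \<ge> 3"
    and conformal: "\<And>x. gform (minkowski i0) (A *v x) (A *v x) = f * gform (minkowski i0) x x"
  shows "f \<ge> 0"
proof (rule ccontr)
  assume "\<not> f \<ge> 0"
  obtain i j :: 'n where ij: "i \<noteq> i0" "j \<noteq> i0" "i \<noteq> j"
    using two_indices_besides[OF assms(1)] .
  define a where "a = (A *v axis j 1)$i0"
  define b where "b = (A *v axis i 1)$i0"
  \<comment> \<open>span {e_i, e_j} is spacelike and 2-dimensional, so w \<mapsto> (A w)_0 has a kernel there\<close>
  obtain w where w: "(A *v w)$i0 = 0" "gform (minkowski i0) w w < 0"
  proof (cases "b = 0")
    case True
    then show ?thesis
      using that[of "axis i 1"] ij by (simp add: b_def gform_axis)
  next
    case False
    have "(A *v (a *\<^sub>R axis i 1 - b *\<^sub>R axis j 1))$i0 = 0"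
      by (simp add: a_def b_def matrix_vector_mult_diff_distrib matrix_vector_mult_scaleR)
    moreover have "gform (minkowski i0) (a *\<^sub>R axis i 1 - b *\<^sub>R axis j 1) (a *\<^sub>R axis i 1 - b *\<^sub>R axis j 1)
        = - a\<^sup>2 - b\<^sup>2"
      using ij by (simp add: gform_bilinear gform_axis power2_eq_square)
    moreover have "b\<^sup>2 > 0"
      using False by simp
    ultimately show ?thesis
      using that[of "a *\<^sub>R axis i 1 - b *\<^sub>R axis j 1"] by (smt (verit) zero_le_power2)
  qed
  have "gform (minkowski i0) (A *v w) (A *v w) \<le> 0"
    using w(1) by (simp add: gform_minkowski_self)
  moreover have "f * gform (minkowski i0) w w > 0"
    using \<open>\<not> f \<ge> 0\<close> w(2) by (simp add: mult_neg_neg)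
  ultimately show False
    using conformal[of w] by simp
qed

section \<open>Symmetric parts and the cone DP\<close>

lemma sym_antisym_expansion:
  fixes T H :: "real^'n^'n"
  defines "S \<equiv> sym_part T" and "F \<equiv> antisym_part T"
  shows "(S ** H ** transpose S + F ** H ** transpose F) + (S ** H ** transpose F + F ** H ** transpose S)
      = T ** H ** transpose T"
    and "(S ** H ** transpose S + F ** H ** transpose F) - (S ** H ** transpose F + F ** H ** transpose S)
      = transpose T ** H ** T"
proof -
  have "S + F = T" "S - F = transpose T" "transpose S + transpose F = transpose T" "transpose S - transpose F = T"
    by (simp_all add: S_def F_def sym_part_def antisym_part_def vec_eq_iff transpose_def field_simps)
  then have "T ** H ** transpose T = (S + F) ** H ** (transpose S + transpose F)"
    and "transpose T ** H ** T = (S - F) ** H ** (transpose S - transpose F)"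
    by simp_all
  then show "(S ** H ** transpose S + F ** H ** transpose F) + (S ** H ** transpose F + F ** H ** transpose S)
      = T ** H ** transpose T"
    and "(S ** H ** transpose S + F ** H ** transpose F) - (S ** H ** transpose F + F ** H ** transpose S)
      = transpose T ** H ** T"
    by (simp_all add: matrix_add_rdistrib matrix_add_ldistrib matrix_diff_rdistrib matrix_diff_ldistrib
        algebra_simps)
qed

definition bi_conformal :: "real^'n^'n \<Rightarrow> real^'n^'n \<Rightarrow> real \<Rightarrow> bool" where
  "bi_conformal G T c \<longleftrightarrow>
     T ** ginv G ** transpose T = c *\<^sub>R G \<and> transpose T ** ginv G ** T = c *\<^sub>R G"

lemma sym_antisym_conditions_iff_bi_conformal:
  "(\<exists>f::real.
      sym_part T ** ginv G ** transpose (sym_part T)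
        + antisym_part T ** ginv G ** transpose (antisym_part T) = f *\<^sub>R G
    \<and> sym_part T ** ginv G ** transpose (antisym_part T)
        + antisym_part T ** ginv G ** transpose (sym_part T) = 0)
   \<longleftrightarrow> (\<exists>c. bi_conformal G T c)"
  (is "(\<exists>f. ?A = f *\<^sub>R G \<and> ?B = 0) \<longleftrightarrow> _")
proof
  assume "\<exists>f. ?A = f *\<^sub>R G \<and> ?B = 0"
  then show "\<exists>c. bi_conformal G T c"
    using sym_antisym_expansion[of T "ginv G"] by (auto simp: bi_conformal_def)
next
  assume "\<exists>c. bi_conformal G T c"
  then obtain c where sum: "?A + ?B = c *\<^sub>R G" and diff: "?A - ?B = c *\<^sub>R G"
    using sym_antisym_expansion[of T "ginv G"] by (auto simp: bi_conformal_def)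
  have "2 *\<^sub>R ?B = (?A + ?B) - (?A - ?B)"
    by (simp add: scaleR_2 algebra_simps)
  then have "?B = 0"
    by (simp add: sum diff)
  then have "?A = c *\<^sub>R G \<and> ?B = 0"
    using sum by simp
  then show "\<exists>f. ?A = f *\<^sub>R G \<and> ?B = 0" ..
qed

lemma inner_sym_part: "u \<bullet> (sym_part X *v v) = (u \<bullet> (X *v v) + v \<bullet> (X *v u)) / 2"
proof -
  have "u \<bullet> (transpose X *v v) = v \<bullet> (X *v u)"
    by (metis dot_lmul_matrix inner_commute transpose_matrix_vector)
  then show ?thesis
    by (simp add: sym_part_def matrix_vector_mult_add_rdistrib inner_add_right
        flip: scaleR_matrix_vector_assoc)
qed

lemma DP_or_DP_uminus_if_sign_definite:
  assumes "\<sigma> \<noteq> 0"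
    and "\<forall>u v. future_causal G t u \<and> future_causal G t v \<longrightarrow> 0 \<le> \<sigma> * (u \<bullet> (X *v v))"
  shows "DP G t X \<or> DP G t (- X)"
proof (cases "\<sigma> > 0")
  case True
  then have "DP G t X"
    using assms(2) by (auto simp: DP_def zero_le_mult_iff)
  then show ?thesis ..
next
  case False
  then have "DP G t (- X)"
    using assms by (auto simp: DP_def zero_le_mult_iff matrix_vector_mult_uminus_left)
  then show ?thesis ..
qed

lemma DP_sym_part: "DP G t X \<Longrightarrow> DP G t (sym_part X)"
  by (simp add: DP_def inner_sym_part)

lemma sym_part_uminus: "sym_part (- X) = - sym_part X"
  by (simp add: sym_part_def transpose_def vec_eq_iff field_simps)

section \<open>Nondegenerate and Lorentzian metrics\<close>

locale nondegenerate_metric =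
  fixes G :: "real^'n^'n"
  assumes symmetric: "transpose G = G"
    and invertible_metric: "invertible G"
begin

lemma gform_sym: "gform G x y = gform G y x"
  by (rule gform_commute[OF symmetric])

lemma metric_ginv: "G ** ginv G = mat 1"
  by (simp add: ginv_def matrix_inv_right[OF invertible_metric])

lemma ginv_metric: "ginv G ** G = mat 1"
  by (simp add: ginv_def matrix_inv_left[OF invertible_metric])

lemma transpose_ginv: "transpose (ginv G) = ginv G"
proof -
  have "transpose (ginv G) ** G = mat 1"
    by (metis metric_ginv symmetric matrix_transpose_mul transpose_mat)
  then show ?thesis
    by (metis matrix_mul_assoc matrix_mul_lid matrix_mul_rid metric_ginv)
qed

lemma vector_mult_mixed: "k v* mixed G T = (ginv G ** transpose T) *v k"
  by (simp add: mixed_def matrix_transpose_mul transpose_ginv flip: transpose_matrix_vector)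

lemma mixed_mult_lowered: "mixed G T *v (G *v k) = T *v k"
  by (simp add: mixed_def matrix_vector_mul_assoc ginv_metric flip: matrix_mul_assoc)

lemma gform_raised:
  "gform G ((ginv G ** T) *v x) ((ginv G ** T) *v y) = gform (transpose T ** ginv G ** T) x y"
  by (simp add: gform_congruence matrix_transpose_mul transpose_ginv matrix_mul_assoc ginv_metric
      flip: matrix_mul_assoc)

lemma gform_raised_right: "gform G u ((ginv G ** T) *v v) = u \<bullet> (T *v v)"
  by (simp add: gform_def matrix_vector_mul_assoc matrix_mul_assoc metric_ginv)

lemma gform_raised_transpose_left: "gform G ((ginv G ** transpose T) *v u) v = u \<bullet> (T *v v)"
  by (simp add: gform_sym[of _ v] gform_raised_right inner_commute flip: dot_lmul_matrix)

lemma bi_conformal_gform: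
  assumes "bi_conformal G T c"
  shows "gform G ((ginv G ** transpose T) *v x) ((ginv G ** transpose T) *v y) = c * gform G x y"
    and "gform G ((ginv G ** T) *v x) ((ginv G ** T) *v y) = c * gform G x y"
  using assms gform_raised[of "transpose T"] gform_raised[of T]
  by (simp_all add: bi_conformal_def gform_scaleR_matrix)

lemma null_cone_bipreserving_iff_null_cone_forms:
  "null_cone_bipreserving G T \<longleftrightarrow>
     (\<forall>k. null_vec G k \<longrightarrow>
        gform (T ** ginv G ** transpose T) k k = 0 \<and> gform (transpose T ** ginv G ** T) k k = 0)"
proof -
  have "null_or_zero_vec G v \<longleftrightarrow> gform G v v = 0" for v
    by (auto simp: null_or_zero_vec_def null_vec_def)
  moreover have "null_or_zero_cov G w \<longleftrightarrow> gform (ginv G) w w = 0" for w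
    by (auto simp: null_or_zero_cov_def null_vec_def)
  ultimately show ?thesis
    by (simp add: null_cone_bipreserving_def vector_mult_mixed mixed_mult_lowered
        gform_raised[of "transpose T"] gform_congruence[of "ginv G" T])
qed

end

locale lorentz_frame =
  fixes G P :: "real^'n^'n" and i0 :: 'n
  assumes invertible_frame: "invertible P"
    and frame: "transpose P ** G ** P = minkowski i0"
begin

lemma gform_frame: "gform G (P *v x) (P *v y) = gform (minkowski i0) x y"
  by (simp add: gform_congruence frame)

lemma frame_coords: "P *v (matrix_inv P *v x) = x"
  by (simp add: matrix_vector_mul_assoc matrix_inv_right[OF invertible_frame])

lemma gform_coords: "gform G x y = gform (minkowski i0) (matrix_inv P *v x) (matrix_inv P *v y)"
  by (metis gform_frame frame_coords)

lemma coords_eq_0_iff: "matrix_inv P *v x = 0 \<longleftrightarrow> x = 0"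
  by (metis frame_coords matrix_vector_mult_0_right)

lemma metric_eq: "G = transpose (matrix_inv P) ** minkowski i0 ** matrix_inv P"
  using congruence_inverse[OF invertible_frame, of G] by (simp add: frame)

sublocale nondegenerate_metric G
proof
  show "transpose G = G"
    by (simp add: metric_eq matrix_transpose_mul transpose_minkowski matrix_mul_assoc)
  have "invertible (matrix_inv P)"
    using invertible_frame matrix_inv_left matrix_inv_right invertible_def by blast
  moreover have "invertible (minkowski i0)"
    using minkowski_mult_self invertible_def by blast
  ultimately show "invertible G"
    by (simp add: metric_eq invertible_mult transpose_invertible)
qed

lemma timelike_causal_not_orthogonal:
  assumes "gform G t t > 0" "gform G y y \<ge> 0" "y \<noteq> 0"
  shows "gform G t y \<noteq> 0"
  using minkowski_timelike_causal_not_orthogonal[of i0 "matrix_inv P *v t" "matrix_inv P *v y"] assms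
  by (simp add: gform_coords coords_eq_0_iff)

lemma causal_same_cone:
  assumes "gform G x x \<ge> 0" "gform G y y \<ge> 0" "gform G t t > 0"
    and "gform G t x * gform G t y > 0"
  shows "gform G x y \<ge> 0"
  using minkowski_same_cone assms by (simp add: gform_coords)

lemma orthogonal_null_collinear:
  assumes "gform G x x = 0" "gform G y y = 0" "gform G x y = 0" "y \<noteq> 0"
  obtains s where "x = s *\<^sub>R y"
proof -
  obtain s where "matrix_inv P *v x = s *\<^sub>R (matrix_inv P *v y)"
    using minkowski_orthogonal_null_collinear assms by (metis gform_coords coords_eq_0_iff)
  then have "x = s *\<^sub>R y"
    by (metis frame_coords matrix_vector_mult_scaleR)
  then show thesis ..
qed

lemma symmetric_vanishing_on_null_cone:
  fixes Q :: "real^'n^'n"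
  assumes sym: "transpose Q = Q" and null: "\<And>k. null_vec G k \<Longrightarrow> gform Q k k = 0"
  obtains c where "Q = c *\<^sub>R G"
proof
  define M where "M = transpose P ** Q ** P"
  have "transpose M = M"
    by (simp add: M_def matrix_transpose_mul sym matrix_mul_assoc)
  moreover have "gform M x x = 0" if "gform (minkowski i0) x x = 0" for x
    using null[of "P *v x"] that by (cases "P *v x = 0") (auto simp: M_def null_vec_def gform_frame
        simp flip: gform_congruence)
  ultimately have "M = M$i0$i0 *\<^sub>R minkowski i0"
    by (rule minkowski_symmetric_vanishing_on_null_cone) blast
  then show "Q = M$i0$i0 *\<^sub>R G"
    using congruence_inverse[OF invertible_frame, of Q]
    by (metis M_def metric_eq matrix_scalar_ac scalar_matrix_assoc)
qed

lemma conformal_factor_nonneg: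
  fixes L :: "real^'n^'n"
  assumes "CARD('n) \<ge> 3" and conformal: "\<And>x. gform G (L *v x) (L *v x) = f * gform G x x"
  shows "f \<ge> 0"
proof (rule minkowski_conformal_factor_nonneg[OF assms(1)])
  have "P *v ((matrix_inv P ** L ** P) *v x) = L *v (P *v x)" for x
    by (simp add: frame_coords flip: matrix_vector_mul_assoc)
  then show "gform (minkowski i0) ((matrix_inv P ** L ** P) *v x) ((matrix_inv P ** L ** P) *v x)
      = f * gform (minkowski i0) x x" for x
    using conformal by (simp flip: gform_frame)
qed

lemma null_cone_bipreserving_iff_bi_conformal:
  "null_cone_bipreserving G T \<longleftrightarrow> (\<exists>c. bi_conformal G T c)"
proof
  assume "null_cone_bipreserving G T"
  then have null1: "gform (T ** ginv G ** transpose T) k k = 0"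
    and null2: "gform (transpose T ** ginv G ** T) k k = 0" if "null_vec G k" for k
    using that by (simp_all add: null_cone_bipreserving_iff_null_cone_forms)
  obtain c1 where c1: "T ** ginv G ** transpose T = c1 *\<^sub>R G"
    using symmetric_vanishing_on_null_cone null1
      transpose_congruence[OF transpose_ginv, of "transpose T"] by auto
  obtain c2 where c2: "transpose T ** ginv G ** T = c2 *\<^sub>R G"
    using symmetric_vanishing_on_null_cone null2 transpose_congruence[OF transpose_ginv] by blast
  \<comment> \<open>the two factors agree because both products have the same trace against ginv G\<close>
  have "trace (ginv G ** (c *\<^sub>R G)) = c * of_nat CARD('n)" for c
    by (simp add: matrix_scalar_ac trace_scaleR ginv_metric trace_I flip: scalar_matrix_assoc)
  then have "c1 = c2"
    using trace_swap_transpose[OF transpose_ginv, of T] c1 c2 by simp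
  then show "\<exists>c. bi_conformal G T c"
    using c1 c2 by (auto simp: bi_conformal_def)
next
  assume "\<exists>c. bi_conformal G T c"
  then show "null_cone_bipreserving G T"
    by (auto simp: null_cone_bipreserving_iff_null_cone_forms bi_conformal_def gform_scaleR_matrix
        null_vec_def)
qed

lemma causal_pairing_sign:
  assumes "gform G t t > 0" "gform G w w \<ge> 0"
  obtains \<sigma> where "\<sigma> \<noteq> 0" "\<forall>u. future_causal G t u \<longrightarrow> 0 \<le> \<sigma> * gform G w u"
proof (cases "w = 0")
  case True
  then show thesis
    using that[of 1] by simp
next
  case False
  define \<sigma> where "\<sigma> = gform G t w"
  have "\<sigma> \<noteq> 0"
    using timelike_causal_not_orthogonal[OF assms False] by (simp add: \<sigma>_def)
  moreover have "0 \<le> \<sigma> * gform G w u" if "future_causal G t u" for u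
  proof -
    have "gform G t (\<sigma> *\<^sub>R w) * gform G t u > 0"
      using \<open>\<sigma> \<noteq> 0\<close> that by (simp add: future_causal_def gform_scaleR_right \<sigma>_def flip: power2_eq_square)
    moreover have "gform G (\<sigma> *\<^sub>R w) (\<sigma> *\<^sub>R w) \<ge> 0"
      using assms(2) by (simp add: gform_scaleR_left gform_scaleR_right flip: mult.assoc)
    ultimately have "gform G (\<sigma> *\<^sub>R w) u \<ge> 0"
      using causal_same_cone[of "\<sigma> *\<^sub>R w" u t] assms(1) that by (simp add: future_causal_def)
    then show ?thesis
      by (simp add: gform_scaleR_left)
  qed
  ultimately show thesis
    using that by blast
qed

lemma bi_conformal_factor_nonneg:
  assumes "CARD('n) \<ge> 3" "bi_conformal G T c"
  shows "c \<ge> 0"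
  using conformal_factor_nonneg[OF assms(1)] bi_conformal_gform(1)[OF assms(2)] by blast

lemma conformal_pos_keeps_cone_side:
  assumes conformal: "\<And>x y. gform G (L *v x) (L *v y) = c * gform G x y"
    and "c > 0" and t: "gform G t t > 0" and u: "future_causal G t u"
  shows "gform G t (L *v u) * gform G t (L *v t) > 0"
proof -
  have Lu: "gform G (L *v u) (L *v u) \<ge> 0"
    using conformal[of u u] u \<open>c > 0\<close> by (simp add: future_causal_def)
  have Lt: "gform G (- (L *v t)) (- (L *v t)) > 0"
    using conformal[of t t] \<open>c > 0\<close> t by (simp add: gform_minus_right gform_minus_left)
  have Lu_Lt: "gform G (L *v u) (L *v t) > 0"
    using conformal[of u t] u \<open>c > 0\<close> gform_sym[of u t] by (simp add: future_causal_def)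
  then have "L *v u \<noteq> 0" "L *v t \<noteq> 0"
    by auto
  then have "gform G t (L *v u) * gform G t (L *v t) \<noteq> 0"
    using timelike_causal_not_orthogonal[OF t] Lu Lt by (simp add: gform_minus_left gform_minus_right)
  moreover have "\<not> gform G t (L *v u) * gform G t (L *v t) < 0"
  proof
    assume "gform G t (L *v u) * gform G t (L *v t) < 0"
    then have "gform G (L *v u) (- (L *v t)) \<ge> 0"
      using causal_same_cone[of "L *v u" "- (L *v t)" t] Lu Lt t by (simp add: gform_minus_right)
    then show False
      using Lu_Lt by (simp add: gform_minus_right)
  qed
  ultimately show ?thesis
    by linarith
qed

lemma conformal_pos_sign_definite:
  assumes conformal: "\<And>x y. gform G (L *v x) (L *v y) = c * gform G x y"
    and "c > 0" and t: "gform G t t > 0"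
    and u: "future_causal G t u" and v: "future_causal G t v"
  shows "0 \<le> gform G t (L *v t) * gform G (L *v u) v"
proof -
  define \<sigma> where "\<sigma> = gform G t (L *v t)"
  have "gform G t (\<sigma> *\<^sub>R (L *v u)) * gform G t v > 0"
    using conformal_pos_keeps_cone_side[OF conformal \<open>c > 0\<close> t u] v
    by (simp add: \<sigma>_def future_causal_def gform_scaleR_right mult_ac)
  moreover have "gform G (\<sigma> *\<^sub>R (L *v u)) (\<sigma> *\<^sub>R (L *v u)) \<ge> 0"
    using conformal[of u u] \<open>c > 0\<close> u
    by (simp add: future_causal_def gform_scaleR_left gform_scaleR_right flip: mult.assoc)
  ultimately have "gform G (\<sigma> *\<^sub>R (L *v u)) v \<ge> 0"
    using causal_same_cone[of "\<sigma> *\<^sub>R (L *v u)" v t] t v by (simp add: future_causal_def)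
  then show ?thesis
    by (simp add: \<sigma>_def gform_scaleR_left)
qed

lemma bi_conformal_zero_degenerate:
  assumes bc: "bi_conformal G T 0" and t: "gform G t t > 0"
    and "(ginv G ** transpose T) *v t = 0"
  shows "T = 0"
proof -
  \<comment> \<open>each vector ginv G T v is null and orthogonal to t, hence zero\<close>
  have "(ginv G ** T) *v v = 0" for v
    using timelike_causal_not_orthogonal[OF t, of "(ginv G ** T) *v v"] bi_conformal_gform(2)[OF bc, of v v]
      gform_raised_right[of t T v] gform_raised_transpose_left[of T t v] assms(3)
    by auto
  then have "T *v v = 0" for v
    by (metis metric_ginv matrix_mul_assoc matrix_mul_lid matrix_vector_mul_assoc matrix_vector_mult_0_right)
  then show ?thesis
    by (simp add: matrix_eq)
qed

lemma bi_conformal_zero_rank_one: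
  fixes T :: "real^'n^'n" and t u v :: "real^'n"
  defines "n \<equiv> (ginv G ** transpose T) *v t" and "m \<equiv> (ginv G ** T) *v t"
  assumes bc: "bi_conformal G T 0" and "n \<noteq> 0"
  shows "(u \<bullet> (T *v v)) * gform G n t = gform G m u * gform G n v"
proof -
  have "gform G ((ginv G ** transpose T) *v x) ((ginv G ** transpose T) *v y) = 0" for x y
    using bi_conformal_gform(1)[OF bc] by simp
  then obtain s where s: "(ginv G ** transpose T) *v u = s *\<^sub>R n"
    using orthogonal_null_collinear[of "(ginv G ** transpose T) *v u" n] \<open>n \<noteq> 0\<close> by (auto simp: n_def)
  have "u \<bullet> (T *v t) = s * gform G n t"
    using gform_raised_transpose_left[of T u t] s by (simp add: gform_scaleR_left)
  moreover have "u \<bullet> (T *v t) = gform G m u"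
    using gform_raised_right[of u T t] by (simp add: m_def gform_sym)
  moreover have "u \<bullet> (T *v v) = s * gform G n v"
    using gform_raised_transpose_left[of T u v] s by (simp add: gform_scaleR_left)
  ultimately show ?thesis
    by (simp add: mult_ac)
qed

lemma bi_conformal_zero_sign_definite:
  assumes bc: "bi_conformal G T 0" and t: "gform G t t > 0"
  obtains \<sigma> where "\<sigma> \<noteq> 0"
    "\<forall>u v. future_causal G t u \<and> future_causal G t v \<longrightarrow> 0 \<le> \<sigma> * (u \<bullet> (T *v v))"
proof (cases "(ginv G ** transpose T) *v t = 0")
  case True
  then show thesis
    using that[of 1] bi_conformal_zero_degenerate[OF bc t] by simp
next
  case False
  define n where "n = (ginv G ** transpose T) *v t"
  define m where "m = (ginv G ** T) *v t"
  have "gform G n t \<noteq> 0"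
    using timelike_causal_not_orthogonal[OF t, of n] bi_conformal_gform(1)[OF bc, of t t] False
    by (simp add: n_def gform_sym)
  obtain \<sigma>m where "\<sigma>m \<noteq> 0" and \<sigma>m: "\<forall>u. future_causal G t u \<longrightarrow> 0 \<le> \<sigma>m * gform G m u"
    using causal_pairing_sign[OF t, of m] bi_conformal_gform(2)[OF bc, of t t] by (auto simp: m_def)
  obtain \<sigma>n where "\<sigma>n \<noteq> 0" and \<sigma>n: "\<forall>v. future_causal G t v \<longrightarrow> 0 \<le> \<sigma>n * gform G n v"
    using causal_pairing_sign[OF t, of n] bi_conformal_gform(1)[OF bc, of t t] by (auto simp: n_def)
  have "0 \<le> (\<sigma>m * \<sigma>n * gform G n t) * (u \<bullet> (T *v v))"
    if "future_causal G t u" "future_causal G t v" for u v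
  proof -
    have "0 \<le> (\<sigma>m * gform G m u) * (\<sigma>n * gform G n v)"
      using \<sigma>m \<sigma>n that by simp
    also have "\<dots> = (\<sigma>m * \<sigma>n * gform G n t) * (u \<bullet> (T *v v))"
      using bi_conformal_zero_rank_one[OF bc, of t u v] False by (simp add: n_def m_def mult_ac)
    finally show ?thesis .
  qed
  then show thesis
    using that[of "\<sigma>m * \<sigma>n * gform G n t"] \<open>\<sigma>m \<noteq> 0\<close> \<open>\<sigma>n \<noteq> 0\<close> \<open>gform G n t \<noteq> 0\<close>
    by auto
qed

lemma bi_conformal_DP:
  assumes "CARD('n) \<ge> 3" and bc: "bi_conformal G T c" and t: "gform G t t > 0"
  shows "DP G t (sym_part T) \<or> DP G t (- sym_part T)"
proof -
  obtain \<sigma> where "\<sigma> \<noteq> 0"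
    and "\<forall>u v. future_causal G t u \<and> future_causal G t v \<longrightarrow> 0 \<le> \<sigma> * (u \<bullet> (T *v v))"
  proof (cases "c = 0")
    case True
    then show thesis
      using bi_conformal_zero_sign_definite[OF _ t] bc that by blast
  next
    case False
    then have "c > 0"
      using bi_conformal_factor_nonneg[OF assms(1) bc] by simp
    have "t \<noteq> 0" "gform G t t \<ge> 0"
      using t by auto
    then have "future_causal G t t"
      using t by (simp add: future_causal_def)
    then have "gform G t ((ginv G ** transpose T) *v t) \<noteq> 0"
      using conformal_pos_keeps_cone_side[OF bi_conformal_gform(1)[OF bc] \<open>c > 0\<close> t] by auto
    then show thesis
      using that conformal_pos_sign_definite[OF bi_conformal_gform(1)[OF bc] \<open>c > 0\<close> t]
      by (simp add: gform_raised_transpose_left)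
  qed
  then have "DP G t T \<or> DP G t (- T)"
    by (rule DP_or_DP_uminus_if_sign_definite)
  then show ?thesis
    using DP_sym_part sym_part_uminus by metis
qed

end

theorem mainTheorem12:
  fixes G T :: "real^'n^'n" and tau :: "real^'n"
  assumes "CARD('n) \<ge> 3"
    and "lorentzian_metric G"
    and "gform G tau tau > 0"
  shows "((\<exists>f::real.
             sym_part T ** ginv G ** transpose (sym_part T)
               + antisym_part T ** ginv G ** transpose (antisym_part T) = f *\<^sub>R G
           \<and> sym_part T ** ginv G ** transpose (antisym_part T)
               + antisym_part T ** ginv G ** transpose (sym_part T) = 0)
          \<longleftrightarrow> null_cone_bipreserving G T)
       \<and> (null_cone_bipreserving G T \<longrightarrow>
            DP G tau (sym_part T) \<or> DP G tau (- sym_part T))"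
proof -
  obtain P :: "real^'n^'n" and i0 where "invertible P" "transpose P ** G ** P = minkowski i0"
    using assms(2) by (auto simp: lorentzian_metric_def minkowski_def)
  then interpret lorentz_frame G P i0
    by unfold_locales
  show ?thesis
    using sym_antisym_conditions_iff_bi_conformal null_cone_bipreserving_iff_bi_conformal
      bi_conformal_DP[OF assms(1) _ assms(3)] by blast
qed

end
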